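(* Let $P$ be a finite poset, $\phi:P\to\mathbb{N}$ an isotone map and $\mathcal{J}(\phi)=\{\psi\in\mathrm{Hom}(P,\mathbb{N}):\psi\le\phi\}$. The inclusion-minimal elements of the family of sets $\{\Lambda\psi : \psi\in\mathrm{Hom}(P,\mathbb{N}),\ \psi\notin\mathcal{J}(\phi)\}$ are exactly the sets $\{(p_0,0),(p_1,1),\dots,(p_r,r)\}$ where $p_0\le p_1\le\dots\le p_r$ is a multichain in $P$, $\phi(p_r)=r$, and $\phi(p_i)>i$ for all $i<r$.
   Context: $\mathbb{N}=\{0,1,2,\dots\}$; $\mathrm{Hom}(P,\mathbb{N})$ is the set of isotone maps $P\to\mathbb{N}$, ordered by $\psi\le\phi$ iff $\psi(p)\le\phi(p)$ for all $p$. The ascent of $\psi$ is $\Lambda\psi=\{(p,i)\in P\times\mathbb{N}: \psi(q)\le i<\psi(p)\text{ for all } q<p\}$. *)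

theory Defs
  imports Main
begin

text \<open>A finite poset P is modelled as a type of class finite and order.
  Hom(P,N) is the set of monotone (isotone) maps; the order on maps is the
  pointwise order of the library.\<close>

definition Hom :: "('a::order \<Rightarrow> nat) set" where
  "Hom = {\<psi>. mono \<psi>}"

definition ascent :: "('a::order \<Rightarrow> nat) \<Rightarrow> ('a \<times> nat) set" where
  "ascent \<psi> = {(p, i). (\<forall>q. q < p \<longrightarrow> \<psi> q \<le> i) \<and> i < \<psi> p}"

definition J :: "('a::order \<Rightarrow> nat) \<Rightarrow> ('a \<Rightarrow> nat) set" where
  "J \<phi> = {\<psi> \<in> Hom. \<psi> \<le> \<phi>}"

definition inclusion_minimal :: "'b set set \<Rightarrow> 'b set \<Rightarrow> bool" where
  "inclusion_minimal F S \<longleftrightarrow> S \<in> F \<and> (\<forall>T\<in>F. T \<subseteq> S \<longrightarrow> T = S)"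

end

theory Submission
  imports Defs
begin

text \<open>Every \<open>(x, i)\<close> with \<open>i < \<psi> x\<close> can be pushed down the finite poset to an ascent
  \<open>(y, i)\<close> with \<open>y \<le> x\<close>; iterating this from an ascent \<open>(y, r)\<close> produces a multichain
  \<open>p 0 \<le> \<dots> \<le> p r = y\<close> all of whose points \<open>(p i, i)\<close> are ascents. If \<open>\<not> \<psi> \<le> \<phi>\<close>, choosing
  the least \<open>r\<close> carrying an ascent \<open>(y, r)\<close> with \<open>\<phi> y \<le> r\<close> makes this multichain critical:
  \<open>\<phi> (p r) = r\<close> and \<open>\<phi> (p i) > i\<close> below. Conversely the set of a critical multichain is the
  ascent of the height function \<open>x \<mapsto> 1 + max {i. p i \<le> x}\<close> (\<open>0\<close> if that set is empty),
  which exceeds \<open>\<phi>\<close> at \<open>p r\<close>, and two such sets are comparable only if they are equal.\<close>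

definition critical_chain :: "('a::order \<Rightarrow> nat) \<Rightarrow> nat \<Rightarrow> (nat \<Rightarrow> 'a) \<Rightarrow> bool" where
  "critical_chain \<phi> r p \<longleftrightarrow> (\<forall>i<r. p i \<le> p (Suc i)) \<and> \<phi> (p r) = r \<and> (\<forall>i<r. i < \<phi> (p i))"

definition graph_upto :: "nat \<Rightarrow> (nat \<Rightarrow> 'a) \<Rightarrow> ('a \<times> nat) set" where
  "graph_upto r p = {(p i, i) | i. i \<le> r}"

lemma inclusion_minimal_iff_basis:
  assumes "C \<subseteq> F"
    and "\<And>T. T \<in> F \<Longrightarrow> \<exists>B\<in>C. B \<subseteq> T"
    and "\<And>B B'. B \<in> C \<Longrightarrow> B' \<in> C \<Longrightarrow> B' \<subseteq> B \<Longrightarrow> B' = B"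
  shows "inclusion_minimal F S \<longleftrightarrow> S \<in> C"
  using assms unfolding inclusion_minimal_def by (metis subset_iff subset_antisym)

lemma multichain_le:
  fixes p :: "nat \<Rightarrow> 'a::order"
  assumes "\<forall>i<r. p i \<le> p (Suc i)" "i \<le> k" "k \<le> r"
  shows "p i \<le> p k"
  by (rule lift_Suc_mono_le_ivl[of "{..<r}"]) (use assms in auto)

lemma ascent_below:
  fixes \<psi> :: "'a::{finite, order} \<Rightarrow> nat"
  assumes "i < \<psi> x"
  shows "\<exists>y\<le>x. (y, i) \<in> ascent \<psi>"
proof -
  obtain y where y: "y \<le> x" "i < \<psi> y" and minimal: "\<And>q. q \<le> y \<Longrightarrow> i < \<psi> q \<Longrightarrow> y = q"
    using finite_has_minimal2[of "{y. i < \<psi> y}" x] assms by auto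
  have "\<psi> q \<le> i" if "q < y" for q
    using minimal[of q] that by force
  with y show ?thesis unfolding ascent_def by auto
qed

lemma ascent_chain_below:
  fixes \<psi> :: "'a::{finite, order} \<Rightarrow> nat"
  assumes "(y, r) \<in> ascent \<psi>"
  shows "\<exists>p. p r = y \<and> (\<forall>i<r. p i \<le> p (Suc i)) \<and> graph_upto r p \<subseteq> ascent \<psi>"
  using assms
proof (induction r arbitrary: y)
  case 0
  then show ?case by (intro exI[of _ "\<lambda>_. y"]) (auto simp: graph_upto_def)
next
  case (Suc r)
  then have "r < \<psi> y" unfolding ascent_def by auto
  then obtain z where "z \<le> y" "(z, r) \<in> ascent \<psi>" using ascent_below by blast
  with Suc.IH obtain p where p: "p r = z" "\<forall>i<r. p i \<le> p (Suc i)" "graph_upto r p \<subseteq> ascent \<psi>"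
    by blast
  let ?q = "p(Suc r := y)"
  have "\<forall>i<Suc r. ?q i \<le> ?q (Suc i)"
    using p(1,2) \<open>z \<le> y\<close> by (auto simp: less_Suc_eq)
  moreover have "graph_upto (Suc r) ?q \<subseteq> ascent \<psi>"
    using p(3) Suc.prems by (auto simp: graph_upto_def le_Suc_eq)
  ultimately show ?case by (metis fun_upd_same)
qed

lemma critical_chain_in_ascent:
  fixes \<psi> \<phi> :: "'a::{finite, order} \<Rightarrow> nat"
  assumes "mono \<phi>" "\<not> \<psi> \<le> \<phi>"
  shows "\<exists>r p. critical_chain \<phi> r p \<and> graph_upto r p \<subseteq> ascent \<psi>"
proof -
  define R where "R r \<longleftrightarrow> (\<exists>y. (y, r) \<in> ascent \<psi> \<and> \<phi> y \<le> r)" for r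
  have R_phi: "R (\<phi> x)" if exceeds: "\<phi> x < \<psi> x" for x
  proof -
    obtain y where "y \<le> x" "(y, \<phi> x) \<in> ascent \<psi>" using ascent_below[where \<psi> = \<psi>, OF exceeds] by blast
    moreover have "\<phi> y \<le> \<phi> x" using assms(1) \<open>y \<le> x\<close> by (rule monoD)
    ultimately show ?thesis unfolding R_def by blast
  qed
  obtain x where "\<phi> x < \<psi> x" using assms(2) by (auto simp: le_fun_def not_le)
  then have "R (\<phi> x)" by (rule R_phi)
  define r where "r = (LEAST r. R r)"
  have not_R: "\<not> R k" if "k < r" for k using not_less_Least[of k R] that r_def by simp
  obtain y where y: "(y, r) \<in> ascent \<psi>" "\<phi> y \<le> r"
    using LeastI[of R, OF \<open>R (\<phi> x)\<close>] unfolding R_def r_def by blast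
  then have "\<phi> y < \<psi> y" unfolding ascent_def by auto
  then have "R (\<phi> y)" by (rule R_phi)
  then have "\<phi> y = r" using not_R y(2) le_neq_implies_less by blast
  obtain p where p: "p r = y" "\<forall>i<r. p i \<le> p (Suc i)" "graph_upto r p \<subseteq> ascent \<psi>"
    using ascent_chain_below[OF y(1)] by blast
  have "i < \<phi> (p i)" if "i < r" for i
  proof -
    have "(p i, i) \<in> ascent \<psi>" using p(3) that unfolding graph_upto_def by auto
    with not_R[OF that] show ?thesis unfolding R_def by (auto simp: not_le)
  qed
  with p \<open>\<phi> y = r\<close> show ?thesis unfolding critical_chain_def by blast
qed

definition chain_height :: "nat \<Rightarrow> (nat \<Rightarrow> 'a::order) \<Rightarrow> 'a \<Rightarrow> nat" where
  "chain_height r p x = Max (insert 0 {Suc i | i. i \<le> r \<and> p i \<le> x})"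

lemma finite_chain_height_set: "finite (insert 0 {Suc i | i. i \<le> r \<and> p i \<le> x})"
  by (rule finite_subset[of _ "insert 0 (Suc ` {..r})"]) auto

lemma mono_chain_height: "mono (chain_height r p)"
  unfolding chain_height_def
  by (intro monoI Max_mono finite_chain_height_set) (auto intro: order_trans)

lemma chain_height_lower:
  assumes "i \<le> r" "p i \<le> x"
  shows "Suc i \<le> chain_height r p x"
  unfolding chain_height_def using assms finite_chain_height_set by (intro Max_ge) auto

lemma chain_height_cases:
  "chain_height r p x = 0 \<or> (\<exists>k\<le>r. p k \<le> x \<and> chain_height r p x = Suc k)"
  using Max_in[OF finite_chain_height_set, of r p x] unfolding chain_height_def by auto

lemma ascent_chain_height:
  assumes chain: "\<forall>i<r. p i \<le> p (Suc i)"
  shows "ascent (chain_height r p) = graph_upto r p"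
proof (intro subset_antisym subsetI)
  fix z assume "z \<in> ascent (chain_height r p)"
  then obtain x i where z: "z = (x, i)" and below: "\<And>q. q < x \<Longrightarrow> chain_height r p q \<le> i"
    and "i < chain_height r p x"
    unfolding ascent_def by auto
  then obtain k where k: "k \<le> r" "p k \<le> x" "i \<le> k"
    using chain_height_cases[of r p x] by auto
  then have "p i \<le> x" using multichain_le[OF chain] by (meson order_trans)
  moreover have "\<not> p i < x"
    using below[of "p i"] chain_height_lower[of i r p "p i"] k by auto
  ultimately show "z \<in> graph_upto r p"
    using z k unfolding graph_upto_def by auto
next
  fix z assume "z \<in> graph_upto r p"
  then obtain i where z: "z = (p i, i)" "i \<le> r" unfolding graph_upto_def by auto
  have "chain_height r p q \<le> i" if "q < p i" for q
  proof -
    have False if "k \<le> r" "p k \<le> q" "i \<le> k" for k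
      using multichain_le[OF chain \<open>i \<le> k\<close> \<open>k \<le> r\<close>] \<open>q < p i\<close> that(2) by simp
    then show ?thesis using chain_height_cases[of r p q] by fastforce
  qed
  moreover have "i < chain_height r p (p i)" using chain_height_lower[of i r p "p i"] z(2) by simp
  ultimately show "z \<in> ascent (chain_height r p)" using z unfolding ascent_def by auto
qed

lemma critical_chain_graph_in_family:
  assumes "critical_chain \<phi> r p"
  shows "graph_upto r p \<in> {ascent \<psi> | \<psi>. \<psi> \<in> Hom \<and> \<psi> \<notin> J \<phi>}"
proof -
  from assms have chain: "\<forall>i<r. p i \<le> p (Suc i)" and top: "\<phi> (p r) = r"
    by (simp_all add: critical_chain_def)
  have "\<phi> (p r) < chain_height r p (p r)" using chain_height_lower[of r r p "p r"] top by simp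
  then have "\<not> chain_height r p \<le> \<phi>" by (auto simp: le_fun_def not_le)
  with mono_chain_height ascent_chain_height[OF chain] show ?thesis
    by (auto simp: Hom_def J_def)
qed

lemma critical_chain_graph_eq:
  assumes "critical_chain \<phi> r p" "critical_chain \<phi> r' p'" "graph_upto r' p' \<subseteq> graph_upto r p"
  shows "graph_upto r' p' = graph_upto r p"
proof -
  have "(p' r', r') \<in> graph_upto r p" using assms(3) unfolding graph_upto_def by blast
  then have "r' \<le> r" "p' r' = p r'" unfolding graph_upto_def by auto
  have "\<not> r' < r"
  proof
    assume "r' < r"
    then have "r' < \<phi> (p r')" using assms(1) by (simp add: critical_chain_def)
    with \<open>p' r' = p r'\<close> assms(2) show False by (simp add: critical_chain_def)
  qed
  with \<open>r' \<le> r\<close> have "r' = r" by simp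
  have "p' i = p i" if "i \<le> r" for i
    using assms(3) that \<open>r' = r\<close> unfolding graph_upto_def by blast
  then show ?thesis using \<open>r' = r\<close> unfolding graph_upto_def by force
qed

theorem proposition4p12:
  fixes \<phi> :: "'a::{finite, order} \<Rightarrow> nat"
  assumes "\<phi> \<in> Hom"
  shows "inclusion_minimal {ascent \<psi> | \<psi>. \<psi> \<in> Hom \<and> \<psi> \<notin> J \<phi>} S \<longleftrightarrow>
    (\<exists>(r::nat) (p::nat \<Rightarrow> 'a).
       (\<forall>i<r. p i \<le> p (Suc i)) \<and> \<phi> (p r) = r \<and> (\<forall>i<r. \<phi> (p i) > i) \<and>
       S = {(p i, i) | i. i \<le> r})"
proof -
  let ?F = "{ascent \<psi> | \<psi>. \<psi> \<in> Hom \<and> \<psi> \<notin> J \<phi>}"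
  let ?C = "{graph_upto r p | r p. critical_chain \<phi> r p}"
  have "?C \<subseteq> ?F" using critical_chain_graph_in_family by blast
  moreover have "\<exists>B\<in>?C. B \<subseteq> T" if "T \<in> ?F" for T
  proof -
    obtain \<psi> where T: "T = ascent \<psi>" and "\<psi> \<in> Hom" "\<psi> \<notin> J \<phi>" using \<open>T \<in> ?F\<close> by blast
    then have "\<not> \<psi> \<le> \<phi>" by (simp add: J_def)
    with assms obtain r p where "critical_chain \<phi> r p" "graph_upto r p \<subseteq> ascent \<psi>"
      using critical_chain_in_ascent[of \<phi> \<psi>] by (auto simp: Hom_def)
    with T show ?thesis by blast
  qed
  moreover have "B' = B" if "B \<in> ?C" "B' \<in> ?C" "B' \<subseteq> B" for B B'
    using that critical_chain_graph_eq[of \<phi>] by blast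
  ultimately have "inclusion_minimal ?F S \<longleftrightarrow> S \<in> ?C" by (rule inclusion_minimal_iff_basis)
  also have "\<dots> \<longleftrightarrow> (\<exists>r p. critical_chain \<phi> r p \<and> S = graph_upto r p)" by blast
  finally show ?thesis by (simp only: critical_chain_def graph_upto_def conj_assoc)
qed

end
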